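(* Let $H$ be a bialgebra over a commutative ring $\Bbbk$ and $A$ a left $H$-module algebra. Then the maps $\Phi:H^{\otimes n}\to\mathrm{Hom}_\Bbbk(A^{\otimes n},A)$, $\Phi(h_1\otimes\dots\otimes h_n)(a_1\otimes\dots\otimes a_n)=(h_1.a_1)\cdots(h_n.a_n)$, define a morphism of linear operads with multiplication from the operad $\mathcal{O}_H$ (whose cochain complex is the cobar construction $\Omega H$) to the endomorphism operad $\mathcal{E}nd(A)$. In particular $\Phi$ induces a morphism of Gerstenhaber algebras $H^*(\Phi):\mathrm{Cotor}^*_H(\Bbbk,\Bbbk)\to HH^*(A,A)$.
   Context: A left $H$-module algebra is an algebra $A$ with a left $H$-module structure such that $h.(ab)=(h^{(1)}.a)(h^{(2).}b)$ and $h.1_A=\varepsilon(h)1_A$. $\mathcal{O}_H(n)=H^{\otimes n}$ with $(a_1\otimes\dots\otimes a_m)\circ_i(b_1\otimes\dots\otimes b_n)=a_1\otimes\dots\otimes a_{i-1}\otimes a_i^{(1)}b_1\otimes\dots\otimes a_i^{(n)}b_n\otimes a_{i+1}\otimes\dots\otimes a_m$ (with $\Delta^{n-1}(a_i)=a_i^{(1)}\otimes\dots\otimes a_i^{(n)}$), identity $1_H$, multiplication $1_H\otimes1_H$, $e=1\in\Bbbk$. $\mathcal{E}nd(A)(n)=\mathrm{Hom}(A^{\otimes n},A)$ with $\gamma(f;g_1,\dots,g_n)=f\circ(g_1\otimes\dots\otimes g_n)$, identity $\mathrm{id}_A$, multiplication the product of $A$, $e$ the unit $\Bbbk\to A$.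 For an operad with multiplication $(O,\mu,e)$, the cohomology of the cochain complex ($df=\mu\circ_2f+\sum_i(-1)^if\circ_i\mu+(-1)^{n+1}\mu\circ_1f$) is a Gerstenhaber algebra with cup product $(\mu\circ_1f)\circ_{m+1}g$ and bracket $\{f,g\}=f\bar\circ g-(-1)^{(m-1)(n-1)}g\bar\circ f$, $f\bar\circ g=(-1)^{(m-1)(n-1)}\sum_i(-1)^{(n-1)(i-1)}f\circ_ig$; for $\mathcal{O}_H$ this gives $\mathrm{Cotor}^*_H(\Bbbk,\Bbbk)$ and for $\mathcal{E}nd(A)$ it gives $HH^*(A,A)$. *)

theory Defs
  imports Main
begin

text \<open>The bialgebra H is
a type 'h whose ring structure (ab_group_add + ring_1) is the algebra structure of H, with
an explicit scalar multiplication sH.  Likewise the algebra A is a type 'a with scalar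
multiplication sA.  Elements of the tensor power H^n are represented by finite formal
k-linear combinations of pure tensors, i.e. lists of pairs (c, [h1,...,hn]); two
representatives are identified (teq) iff their difference lies in the k-submodule of the
free k-module on 'h list spanned by the multilinearity relations (the usual construction of
the tensor product).  The coproduct is given as a representative in H^2 for each h.
End(A)(n) = Hom(A^n, A) is identified (universal property of the tensor product) with
k-multilinear maps 'a list => 'a, considered on lists of length n.\<close>

type_synonym ('k, 'h) tens = "('k \<times> 'h list) list"

definition basis :: "'h list \<Rightarrow> 'h list \<Rightarrow> 'k::comm_ring_1" where
  "basis t t' = (if t' = t then 1 else 0)"

inductive_set tens_rel :: "('k::comm_ring_1 \<Rightarrow> 'h::ab_group_add \<Rightarrow> 'h) \<Rightarrow> ('h list \<Rightarrow> 'k) set"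
  for sH where
  zero: "(\<lambda>_. 0) \<in> tens_rel sH"
| add: "u \<in> tens_rel sH \<Longrightarrow> v \<in> tens_rel sH \<Longrightarrow> (\<lambda>t. u t + v t) \<in> tens_rel sH"
| smult: "u \<in> tens_rel sH \<Longrightarrow> (\<lambda>t. c * u t) \<in> tens_rel sH"
| addgen: "(\<lambda>t. basis (xs @ (a + b) # ys) t - basis (xs @ a # ys) t - basis (xs @ b # ys) t)
             \<in> tens_rel sH"
| smultgen: "(\<lambda>t. basis (xs @ sH c a # ys) t - c * basis (xs @ a # ys) t) \<in> tens_rel sH"

definition fs :: "('k::comm_ring_1, 'h) tens \<Rightarrow> 'h list \<Rightarrow> 'k" where
  "fs x t = sum_list (map fst (filter (\<lambda>p. snd p = t) x))"

definition teq :: "('k::comm_ring_1 \<Rightarrow> 'h::ab_group_add \<Rightarrow> 'h) \<Rightarrow> ('k, 'h) tens \<Rightarrow> ('k, 'h) tens \<Rightarrow> bool" where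
  "teq sH x y \<longleftrightarrow> (\<lambda>t. fs x t - fs y t) \<in> tens_rel sH"

definition tarity :: "nat \<Rightarrow> ('k, 'h) tens \<Rightarrow> bool" where
  "tarity n x \<longleftrightarrow> (\<forall>p\<in>set x. length (snd p) = n)"

definition tscale :: "'k::comm_ring_1 \<Rightarrow> ('k, 'h) tens \<Rightarrow> ('k, 'h) tens" where
  "tscale c x = map (\<lambda>(d, t). (c * d, t)) x"

definition tmult :: "('k::comm_ring_1, 'h::ring_1) tens \<Rightarrow> ('k, 'h) tens \<Rightarrow> ('k, 'h) tens" where
  "tmult x y = concat (map (\<lambda>(c, us). map (\<lambda>(d, vs). (c * d, map2 (*) us vs)) y) x)"

text \<open>(Delta tensor id) and (id tensor Delta) applied to an element of H tensor H.\<close>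
definition tensL :: "('h \<Rightarrow> ('k::comm_ring_1, 'h) tens) \<Rightarrow> ('k, 'h) tens \<Rightarrow> ('k, 'h) tens" where
  "tensL D x = concat (map (\<lambda>(c, ts). map (\<lambda>(d, us). (c * d, us @ [ts ! 1])) (D (ts ! 0))) x)"

definition tensR :: "('h \<Rightarrow> ('k::comm_ring_1, 'h) tens) \<Rightarrow> ('k, 'h) tens \<Rightarrow> ('k, 'h) tens" where
  "tensR D x = concat (map (\<lambda>(c, ts). map (\<lambda>(d, us). (c * d, (ts ! 0) # us)) (D (ts ! 1))) x)"

definition is_kmodule :: "('k::comm_ring_1 \<Rightarrow> 'm::ab_group_add \<Rightarrow> 'm) \<Rightarrow> bool" where
  "is_kmodule s \<longleftrightarrow>
     (\<forall>c d x. s (c + d) x = s c x + s d x) \<and>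
     (\<forall>c x y. s c (x + y) = s c x + s c y) \<and>
     (\<forall>c d x. s (c * d) x = s c (s d x)) \<and>
     (\<forall>x. s 1 x = x)"

definition is_kalgebra :: "('k::comm_ring_1 \<Rightarrow> 'm::ring_1 \<Rightarrow> 'm) \<Rightarrow> bool" where
  "is_kalgebra s \<longleftrightarrow> is_kmodule s \<and>
     (\<forall>c x y. s c (x * y) = s c x * y \<and> s c (x * y) = x * s c y)"

definition is_bialgebra ::
  "('k::comm_ring_1 \<Rightarrow> 'h::ring_1 \<Rightarrow> 'h) \<Rightarrow> ('h \<Rightarrow> ('k, 'h) tens) \<Rightarrow> ('h \<Rightarrow> 'k) \<Rightarrow> bool" where
  "is_bialgebra sH D eps \<longleftrightarrow>
     is_kalgebra sH \<and>
     \<comment> \<open>coproduct: a k-linear map H -> H tensor H\<close>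
     (\<forall>h. tarity 2 (D h)) \<and>
     (\<forall>g h. teq sH (D (g + h)) (D g @ D h)) \<and>
     (\<forall>c h. teq sH (D (sH c h)) (tscale c (D h))) \<and>
     \<comment> \<open>coassociativity\<close>
     (\<forall>h. teq sH (tensL D (D h)) (tensR D (D h))) \<and>
     \<comment> \<open>counit: a k-linear map H -> k\<close>
     (\<forall>g h. eps (g + h) = eps g + eps h) \<and>
     (\<forall>c h. eps (sH c h) = c * eps h) \<and>
     (\<forall>h. sum_list (map (\<lambda>(c, us). sH (c * eps (us ! 0)) (us ! 1)) (D h)) = h) \<and>
     (\<forall>h. sum_list (map (\<lambda>(c, us). sH (c * eps (us ! 1)) (us ! 0)) (D h)) = h) \<and>
     \<comment> \<open>coproduct and counit are algebra maps\<close>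
     (\<forall>g h. teq sH (D (g * h)) (tmult (D g) (D h))) \<and>
     teq sH (D 1) [(1, [1, 1])] \<and>
     (\<forall>g h. eps (g * h) = eps g * eps h) \<and>
     eps 1 = 1"

definition is_module_algebra ::
  "('k::comm_ring_1 \<Rightarrow> 'h::ring_1 \<Rightarrow> 'h) \<Rightarrow> ('h \<Rightarrow> ('k, 'h) tens) \<Rightarrow> ('h \<Rightarrow> 'k) \<Rightarrow>
   ('k \<Rightarrow> 'a::ring_1 \<Rightarrow> 'a) \<Rightarrow> ('h \<Rightarrow> 'a \<Rightarrow> 'a) \<Rightarrow> bool" where
  "is_module_algebra sH D eps sA act \<longleftrightarrow>
     is_kalgebra sA \<and>
     \<comment> \<open>k-bilinear left H-module structure\<close>
     (\<forall>g h a. act (g + h) a = act g a + act h a) \<and>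
     (\<forall>h a b. act h (a + b) = act h a + act h b) \<and>
     (\<forall>c h a. act (sH c h) a = sA c (act h a)) \<and>
     (\<forall>c h a. act h (sA c a) = sA c (act h a)) \<and>
     (\<forall>g h a. act (g * h) a = act g (act h a)) \<and>
     (\<forall>a. act 1 a = a) \<and>
     \<comment> \<open>module algebra axioms\<close>
     (\<forall>h a b. act h (a * b) = sum_list (map (\<lambda>(c, us). sA c (act (us ! 0) a * act (us ! 1) b)) (D h))) \<and>
     (\<forall>h. act h 1 = sA (eps h) 1)"

text \<open>Iterated coproduct Delta^(n-1) : H -> H^n, with Delta^(-1) = eps.\<close>
fun iterD :: "('h \<Rightarrow> ('k::comm_ring_1, 'h) tens) \<Rightarrow> ('h \<Rightarrow> 'k) \<Rightarrow> nat \<Rightarrow> 'h \<Rightarrow> ('k, 'h) tens" where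
  "iterD D eps 0 h = [(eps h, [])]"
| "iterD D eps (Suc 0) h = [(1, [h])]"
| "iterD D eps (Suc (Suc k)) h =
     concat (map (\<lambda>(d, us). map (\<lambda>(e, vs). (d * e, (us ! 0) # vs)) (iterD D eps (Suc k) (us ! 1))) (D h))"

text \<open>Partial composition in O_H: x o_i y for x in H^m, y in H^n (1 <= i <= m).\<close>
definition compO :: "('h::ring_1 \<Rightarrow> ('k::comm_ring_1, 'h) tens) \<Rightarrow> ('h \<Rightarrow> 'k) \<Rightarrow>
    nat \<Rightarrow> nat \<Rightarrow> nat \<Rightarrow> ('k, 'h) tens \<Rightarrow> ('k, 'h) tens \<Rightarrow> ('k, 'h) tens" where
  "compO D eps m n i x y =
     concat (map (\<lambda>(c, as). concat (map (\<lambda>(d, bs).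
        map (\<lambda>(e, ds). (c * d * e, take (i - 1) as @ map2 (*) ds bs @ drop i as))
          (iterD D eps n (as ! (i - 1)))) y)) x)"

definition compE :: "nat \<Rightarrow> nat \<Rightarrow> nat \<Rightarrow> ('a list \<Rightarrow> 'a) \<Rightarrow> ('a list \<Rightarrow> 'a) \<Rightarrow> 'a list \<Rightarrow> 'a" where
  "compE m n i f g = (\<lambda>as. f (take (i - 1) as @ [g (take n (drop (i - 1) as))] @ drop (i - 1 + n) as))"

definition multilinear :: "('k::comm_ring_1 \<Rightarrow> 'a::ring_1 \<Rightarrow> 'a) \<Rightarrow> nat \<Rightarrow> ('a list \<Rightarrow> 'a) \<Rightarrow> bool" where
  "multilinear sA n f \<longleftrightarrow>
     (\<forall>xs ys a b. length xs + length ys + 1 = n \<longrightarrow>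
        f (xs @ (a + b) # ys) = f (xs @ a # ys) + f (xs @ b # ys)) \<and>
     (\<forall>xs ys c a. length xs + length ys + 1 = n \<longrightarrow>
        f (xs @ sA c a # ys) = sA c (f (xs @ a # ys)))"

definition Phi :: "('k::comm_ring_1 \<Rightarrow> 'a::ring_1 \<Rightarrow> 'a) \<Rightarrow> ('h \<Rightarrow> 'a \<Rightarrow> 'a) \<Rightarrow> ('k, 'h) tens \<Rightarrow> 'a list \<Rightarrow> 'a" where
  "Phi sA act x = (\<lambda>as. sum_list (map (\<lambda>(c, hs). sA c (prod_list (map2 act hs as))) x))"

text \<open>Generic Gerstenhaber operations of an operad with multiplication, given its
addition, zero, multiplication by signs, partial compositions (cmp m n i f g = f o_i g for
f of arity m and g of arity n) and multiplication mu.\<close>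
definition neg1pow :: "int \<Rightarrow> int" where
  "neg1pow k = (if even k then 1 else -1)"

definition op_d :: "('x \<Rightarrow> 'x \<Rightarrow> 'x) \<Rightarrow> 'x \<Rightarrow> (int \<Rightarrow> 'x \<Rightarrow> 'x) \<Rightarrow>
    (nat \<Rightarrow> nat \<Rightarrow> nat \<Rightarrow> 'x \<Rightarrow> 'x \<Rightarrow> 'x) \<Rightarrow> 'x \<Rightarrow> nat \<Rightarrow> 'x \<Rightarrow> 'x" where
  "op_d add zero sg cmp mu n f =
     add (cmp 2 n 2 mu f)
       (add (foldr add (map (\<lambda>i. sg (neg1pow (int i)) (cmp n 2 i f mu)) [1..<n+1]) zero)
            (sg (neg1pow (int n + 1)) (cmp 2 n 1 mu f)))"

definition op_cup :: "(nat \<Rightarrow> nat \<Rightarrow> nat \<Rightarrow> 'x \<Rightarrow> 'x \<Rightarrow> 'x) \<Rightarrow> 'x \<Rightarrow> nat \<Rightarrow> nat \<Rightarrow> 'x \<Rightarrow> 'x \<Rightarrow> 'x" where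
  "op_cup cmp mu m n f g = cmp (m + 1) n (m + 1) (cmp 2 m 1 mu f) g"

definition op_prelie :: "('x \<Rightarrow> 'x \<Rightarrow> 'x) \<Rightarrow> 'x \<Rightarrow> (int \<Rightarrow> 'x \<Rightarrow> 'x) \<Rightarrow>
    (nat \<Rightarrow> nat \<Rightarrow> nat \<Rightarrow> 'x \<Rightarrow> 'x \<Rightarrow> 'x) \<Rightarrow> nat \<Rightarrow> nat \<Rightarrow> 'x \<Rightarrow> 'x \<Rightarrow> 'x" where
  "op_prelie add zero sg cmp m n f g =
     sg (neg1pow ((int m - 1) * (int n - 1)))
       (foldr add (map (\<lambda>i. sg (neg1pow ((int n - 1) * (int i - 1))) (cmp m n i f g)) [1..<m+1]) zero)"

definition op_bracket :: "('x \<Rightarrow> 'x \<Rightarrow> 'x) \<Rightarrow> 'x \<Rightarrow> (int \<Rightarrow> 'x \<Rightarrow> 'x) \<Rightarrow>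
    (nat \<Rightarrow> nat \<Rightarrow> nat \<Rightarrow> 'x \<Rightarrow> 'x \<Rightarrow> 'x) \<Rightarrow> nat \<Rightarrow> nat \<Rightarrow> 'x \<Rightarrow> 'x \<Rightarrow> 'x" where
  "op_bracket add zero sg cmp m n f g =
     add (op_prelie add zero sg cmp m n f g)
         (sg (- neg1pow ((int m - 1) * (int n - 1))) (op_prelie add zero sg cmp n m g f))"

definition sgO :: "int \<Rightarrow> ('k::comm_ring_1, 'h) tens \<Rightarrow> ('k, 'h) tens" where
  "sgO s x = tscale (of_int s) x"

definition addE :: "('a::ring_1 list \<Rightarrow> 'a) \<Rightarrow> ('a list \<Rightarrow> 'a) \<Rightarrow> 'a list \<Rightarrow> 'a" where
  "addE f g = (\<lambda>as. f as + g as)"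

definition sgE :: "('k::comm_ring_1 \<Rightarrow> 'a::ring_1 \<Rightarrow> 'a) \<Rightarrow> int \<Rightarrow> ('a list \<Rightarrow> 'a) \<Rightarrow> 'a list \<Rightarrow> 'a" where
  "sgE sA s f = (\<lambda>as. sA (of_int s) (f as))"

definition muE :: "'a::ring_1 list \<Rightarrow> 'a" where
  "muE as = as ! 0 * as ! 1"

definition muO :: "('k::comm_ring_1, 'h::ring_1) tens" where
  "muO = [(1, [1, 1])]"

end

theory Submission imports Defs begin

text \<open>Phi is linear in the tensor and, on a pure tensor, multilinear in the arguments; it
respects the multilinearity relations of the tensor product, so it is well defined on the tensor
power. The only nontrivial identity is compatibility with partial composition: by the
module-algebra axiom, h acting on a product of n factors is computed by the iterated coproduct of
h, and together with (h b).a = h.(b.a) this is exactly the formula defining the composition in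
O_H. The cobar differential, cup product and bracket are built from compositions, signs, sums and
the multiplications alone, so any map preserving these structure maps preserves them as well.\<close>

lemma split_list_at:
  assumes "k < length xs"
  obtains ys y zs where "xs = ys @ y # zs" and "length ys = k"
proof
  show "xs = take k xs @ xs ! k # drop (Suc k) xs"
    using assms by (rule id_take_nth_drop)
qed (use assms in simp)

text \<open>Elements of End(A)(n) are functions on all lists, determined only on lists of length n;
hence morphisms of operads with multiplication are expressed as arity-indexed relations.\<close>

locale operad_mult_rel =
  fixes R :: "nat \<Rightarrow> 'x \<Rightarrow> 'y \<Rightarrow> bool"
    and add :: "'x \<Rightarrow> 'x \<Rightarrow> 'x" and zero :: 'x and sg :: "int \<Rightarrow> 'x \<Rightarrow> 'x"
    and cmp :: "nat \<Rightarrow> nat \<Rightarrow> nat \<Rightarrow> 'x \<Rightarrow> 'x \<Rightarrow> 'x" and mu :: 'x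
    and add' :: "'y \<Rightarrow> 'y \<Rightarrow> 'y" and zero' :: 'y and sg' :: "int \<Rightarrow> 'y \<Rightarrow> 'y"
    and cmp' :: "nat \<Rightarrow> nat \<Rightarrow> nat \<Rightarrow> 'y \<Rightarrow> 'y \<Rightarrow> 'y" and mu' :: 'y
  assumes rel_add: "R n x f \<Longrightarrow> R n y g \<Longrightarrow> R n (add x y) (add' f g)"
    and rel_zero: "R n zero zero'"
    and rel_sg: "R n x f \<Longrightarrow> R n (sg s x) (sg' s f)"
    and rel_cmp: "R m x f \<Longrightarrow> R n y g \<Longrightarrow> 1 \<le> i \<Longrightarrow> i \<le> m \<Longrightarrow>
      R (m + n - 1) (cmp m n i x y) (cmp' m n i f g)"
    and rel_mu: "R 2 mu mu'"
begin

lemma rel_foldr_add: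
  "(\<And>i. i \<in> set l \<Longrightarrow> R n (F i) (G i)) \<Longrightarrow>
   R n (foldr add (map F l) zero) (foldr add' (map G l) zero')"
  by (induct l) (auto intro: rel_add rel_zero)

lemma rel_op_d:
  assumes "R n x f"
  shows "R (n + 1) (op_d add zero sg cmp mu n x) (op_d add' zero' sg' cmp' mu' n f)"
proof -
  have mu_x: "R (n + 1) (cmp 2 n i mu x) (cmp' 2 n i mu' f)" if "1 \<le> i" "i \<le> 2" for i
    using rel_cmp[OF rel_mu assms that] by simp
  have x_mu: "R (n + 1) (cmp n 2 i x mu) (cmp' n 2 i f mu')" if "i \<in> set [1..<n + 1]" for i
    using rel_cmp[OF assms rel_mu, of i] that by auto
  show ?thesis
    unfolding op_d_def
    by (intro rel_add rel_foldr_add rel_sg mu_x x_mu) simp_all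
qed

lemma rel_op_cup:
  assumes "R m x f" and "R n y g"
  shows "R (m + n) (op_cup cmp mu m n x y) (op_cup cmp' mu' m n f g)"
proof -
  have "R (m + 1) (cmp 2 m 1 mu x) (cmp' 2 m 1 mu' f)"
    using rel_cmp[OF rel_mu assms(1)] by simp
  from rel_cmp[OF this assms(2)] show ?thesis
    unfolding op_cup_def by simp
qed

lemma rel_op_prelie:
  assumes "R m x f" and "R n y g"
  shows "R (m + n - 1) (op_prelie add zero sg cmp m n x y) (op_prelie add' zero' sg' cmp' m n f g)"
  unfolding op_prelie_def
  by (intro rel_sg rel_foldr_add rel_cmp[OF assms]) auto

lemma rel_op_bracket:
  assumes "R m x f" and "R n y g"
  shows "R (m + n - 1) (op_bracket add zero sg cmp m n x y) (op_bracket add' zero' sg' cmp' m n f g)"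
  using rel_op_prelie[OF assms] rel_op_prelie[OF assms(2,1)]
  unfolding op_bracket_def by (simp add: add.commute rel_add rel_sg)

end

locale module_algebra =
  fixes sH :: "'k::comm_ring_1 \<Rightarrow> 'h::ring_1 \<Rightarrow> 'h"
    and D :: "'h \<Rightarrow> ('k, 'h) tens" and eps :: "'h \<Rightarrow> 'k"
    and sA :: "'k \<Rightarrow> 'a::ring_1 \<Rightarrow> 'a" and act :: "'h \<Rightarrow> 'a \<Rightarrow> 'a"
  assumes module_algebra: "is_module_algebra sH D eps sA act"
begin

lemma sA_add_left: "sA (c + d) x = sA c x + sA d x"
  and sA_add_right: "sA c (x + y) = sA c x + sA c y"
  and sA_sA [simp]: "sA c (sA d x) = sA (c * d) x"
  and sA_one [simp]: "sA 1 x = x"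
  and sA_mult_left [simp]: "sA c x * y = sA c (x * y)"
  and sA_mult_right [simp]: "x * sA c y = sA c (x * y)"
  using module_algebra unfolding is_module_algebra_def is_kalgebra_def is_kmodule_def
  by metis+

lemma act_add_left: "act (g + h) a = act g a + act h a"
  and act_add_right [simp]: "act h (a + b) = act h a + act h b"
  and act_sH [simp]: "act (sH c h) a = sA c (act h a)"
  and act_sA [simp]: "act h (sA c a) = sA c (act h a)"
  and act_mult: "act (g * h) a = act g (act h a)"
  and act_one [simp]: "act 1 a = a"
  and act_times: "act h (a * b) = sum_list (map (\<lambda>(c, us). sA c (act (us ! 0) a * act (us ! 1) b)) (D h))"
  and act_unit: "act h 1 = sA (eps h) 1"
  using module_algebra unfolding is_module_algebra_def by simp_all

lemma sA_zero_right [simp]: "sA c 0 = 0"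
  using sA_add_right[of c 0 0] by simp

lemma sA_zero_left [simp]: "sA 0 x = 0"
  using sA_add_left[of 0 0 x] by simp

lemma sA_diff_left: "sA (c - d) x = sA c x - sA d x"
  using sA_add_left[of "c - d" d x] by (simp add: eq_diff_eq)

lemma sA_sum: "finite T \<Longrightarrow> sA c (\<Sum>t\<in>T. f t) = (\<Sum>t\<in>T. sA c (f t))"
  by (induct T rule: finite_induct) (auto simp: sA_add_right)

lemma act_zero [simp]: "act h 0 = 0"
  using act_add_right[of h 0 0] by simp

definition pure_eval :: "'h list \<Rightarrow> 'a list \<Rightarrow> 'a" where
  "pure_eval hs as = prod_list (map2 act hs as)"

lemma Phi_eq_sum: "Phi sA act x as = sum_list (map (\<lambda>(c, hs). sA c (pure_eval hs as)) x)"
  unfolding Phi_def pure_eval_def ..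

lemma Phi_Nil [simp]: "Phi sA act [] as = 0"
  and Phi_Cons [simp]: "Phi sA act ((c, hs) # x) as = sA c (pure_eval hs as) + Phi sA act x as"
  and Phi_append: "Phi sA act (x @ y) as = Phi sA act x as + Phi sA act y as"
  by (simp_all add: Phi_eq_sum)

lemma Phi_tscale: "Phi sA act (tscale c x) as = sA c (Phi sA act x as)"
  by (induct x) (auto simp: tscale_def sA_add_right)

lemma pure_eval_append:
  "length hs = length as \<Longrightarrow> pure_eval (hs @ hs') (as @ as') = pure_eval hs as * pure_eval hs' as'"
  by (simp add: pure_eval_def)

lemma pure_eval_slot:
  assumes "length hs = length as"
  shows "pure_eval (hs @ h # hs') (as @ a # as') = pure_eval hs as * act h a * pure_eval hs' as'"
  using assms by (simp add: pure_eval_def mult.assoc)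

lemma pure_eval_multilinear: "multilinear sA (length hs) (pure_eval hs)"
  unfolding multilinear_def
proof (intro conjI allI impI)
  fix xs ys :: "'a list" and a b :: 'a and c :: 'k
  assume "length xs + length ys + 1 = length hs"
  then have "length xs < length hs"
    by simp
  then obtain hs1 h hs2 where hs: "hs = hs1 @ h # hs2" and len: "length hs1 = length xs"
    by (rule split_list_at)
  show "pure_eval hs (xs @ (a + b) # ys) = pure_eval hs (xs @ a # ys) + pure_eval hs (xs @ b # ys)"
    by (simp add: hs pure_eval_slot len distrib_left distrib_right)
  show "pure_eval hs (xs @ sA c a # ys) = sA c (pure_eval hs (xs @ a # ys))"
    by (simp add: hs pure_eval_slot len)
qed

lemma Phi_multilinear: "tarity n x \<Longrightarrow> multilinear sA n (Phi sA act x)"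
proof (induct x)
  case (Cons p x)
  obtain c hs where p: "p = (c, hs)" by force
  with Cons.prems have "length hs = n" and "tarity n x" by (auto simp: tarity_def)
  with Cons.hyps pure_eval_multilinear[of hs] show ?case
    by (auto simp: multilinear_def p sA_add_right mult.commute)
qed (simp add: multilinear_def)

lemma length_iterD: "(e, ds) \<in> set (iterD D eps n h) \<Longrightarrow> length ds = n"
  by (induction D eps n h arbitrary: e ds rule: iterD.induct) auto

lemma Phi_concat: "Phi sA act (concat xs) as = sum_list (map (\<lambda>x. Phi sA act x as) xs)"
  by (induct xs) (auto simp: Phi_append)

lemma Phi_prepend_factor:
  "Phi sA act (map (\<lambda>(e, vs). (c * e, g # vs)) y) (a # as) = sA c (act g a * Phi sA act y as)"
  by (induct y) (auto simp: pure_eval_def distrib_left sA_add_right)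

lemma act_prod_list:
  "length as = n \<Longrightarrow> act h (prod_list as) = Phi sA act (iterD D eps n h) as"
proof (induction as arbitrary: n h rule: induct_list012)
  case 1
  then show ?case by (simp add: act_unit pure_eval_def)
next
  case (2 a)
  then show ?case by (auto simp: pure_eval_def)
next
  case (3 a b as)
  then obtain k where n: "n = Suc (Suc k)" and "length (b # as) = Suc k" by auto
  then have IH: "act g (b * prod_list as) = Phi sA act (iterD D eps (Suc k) g) (b # as)" for g
    using "3.IH"(2) by simp
  have "act h (prod_list (a # b # as))
      = sum_list (map (\<lambda>(c, us). sA c (act (us ! 0) a * act (us ! 1) (prod_list (b # as)))) (D h))"
    by (simp add: act_times)
  also have "\<dots> = Phi sA act (iterD D eps n h) (a # b # as)"
    by (simp add: n IH Phi_concat Phi_prepend_factor[unfolded split_def] comp_def split_def)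
  finally show ?case .
qed

lemma pure_eval_map2_mult:
  "length ds = length bs \<Longrightarrow> length bs = length as \<Longrightarrow>
   pure_eval (map2 (*) ds bs) as = pure_eval ds (map2 act bs as)"
proof -
  assume "length ds = length bs" "length bs = length as"
  then have "map2 act (map2 (*) ds bs) as = map2 act ds (map2 act bs as)"
    by (simp add: list_eq_iff_nth_eq act_mult)
  then show ?thesis
    by (simp add: pure_eval_def)
qed

lemma Phi_insert_block:
  assumes "length hs1 = length as1" and "length bs = length as2"
    and "\<forall>(e, ds)\<in>set y. length ds = length bs"
  shows "Phi sA act (map (\<lambda>(e, ds). (c * e, hs1 @ map2 (*) ds bs @ hs2)) y) (as1 @ as2 @ as3)
       = sA c (pure_eval hs1 as1 * Phi sA act y (map2 act bs as2) * pure_eval hs2 as3)"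
  using assms(3)
  by (induct y)
     (auto simp: assms(1,2) pure_eval_append pure_eval_map2_mult distrib_left distrib_right
       sA_add_right mult.assoc)

lemma Phi_compO_pure:
  assumes "length hs1 = length as1" and "length bs = length as2"
  shows "Phi sA act (compO D eps m (length bs) (Suc (length hs1)) [(c, hs1 @ h # hs2)] [(d, bs)])
           (as1 @ as2 @ as3)
       = sA c (pure_eval hs1 as1 * act h (sA d (pure_eval bs as2)) * pure_eval hs2 as3)"
proof -
  have "compO D eps m (length bs) (Suc (length hs1)) [(c, hs1 @ h # hs2)] [(d, bs)]
      = map (\<lambda>(e, ds). ((c * d) * e, hs1 @ map2 (*) ds bs @ hs2)) (iterD D eps (length bs) h)"
    by (simp add: compO_def)
  then have "Phi sA act (compO D eps m (length bs) (Suc (length hs1)) [(c, hs1 @ h # hs2)] [(d, bs)])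
      (as1 @ as2 @ as3)
      = sA (c * d) (pure_eval hs1 as1 * Phi sA act (iterD D eps (length bs) h) (map2 act bs as2)
          * pure_eval hs2 as3)"
    using assms by (auto intro!: Phi_insert_block dest: length_iterD)
  also have "Phi sA act (iterD D eps (length bs) h) (map2 act bs as2) = act h (pure_eval bs as2)"
    using assms(2) by (simp add: act_prod_list pure_eval_def)
  finally show ?thesis
    by simp
qed

lemma compO_Nil_right [simp]: "compO D eps m n i x [] = []"
  and compO_Cons_left: "compO D eps m n i (p # x) y = compO D eps m n i [p] y @ compO D eps m n i x y"
  and compO_Cons_right: "compO D eps m n i [p] (q # y) = compO D eps m n i [p] [q] @ compO D eps m n i [p] y"
  by (simp_all add: compO_def split_def)

lemma Phi_compO_single:
  assumes "length hs1 = length as1" and "tarity (length as2) y"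
  shows "Phi sA act (compO D eps m (length as2) (Suc (length hs1)) [(c, hs1 @ h # hs2)] y)
           (as1 @ as2 @ as3)
       = sA c (pure_eval hs1 as1 * act h (Phi sA act y as2) * pure_eval hs2 as3)"
  using assms(2)
proof (induct y)
  case (Cons q y)
  obtain d bs where q: "q = (d, bs)" by force
  with Cons.prems have "length bs = length as2" and "tarity (length as2) y"
    by (auto simp: tarity_def)
  with Cons.hyps Phi_compO_pure[OF assms(1), of bs as2 m c h hs2 d as3] show ?case
    by (subst compO_Cons_right) (simp add: q Phi_append distrib_left distrib_right sA_add_right)
qed simp

lemma Phi_compO:
  assumes x: "tarity m x" and y: "tarity n y" and i: "1 \<le> i" "i \<le> m"
    and as: "length as = m + n - 1"
  shows "Phi sA act (compO D eps m n i x y) as = compE m n i (Phi sA act x) (Phi sA act y) as"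
proof -
  define as1 as2 as3 where "as1 = take (i - 1) as" and "as2 = take n (drop (i - 1) as)"
    and "as3 = drop (i - 1 + n) as"
  have as_split: "as = as1 @ as2 @ as3"
    unfolding as1_def as2_def as3_def by (metis append_take_drop_id drop_drop add.commute)
  have len: "length as1 = i - 1" "length as2 = n"
    using as i unfolding as1_def as2_def by auto
  have "Phi sA act (compO D eps m n i x y) as = Phi sA act x (as1 @ Phi sA act y as2 # as3)"
    using x
  proof (induct x)
    case (Cons p x)
    obtain c hs where p: "p = (c, hs)" by force
    with Cons.prems have "length hs = m" and "tarity m x"
      by (auto simp: tarity_def)
    have "i - 1 < length hs"
      using i \<open>length hs = m\<close> by simp
    then obtain hs1 h hs2 where hs: "hs = hs1 @ h # hs2" and len_hs1: "length hs1 = length as1"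
      using len by (auto elim: split_list_at)
    have ind: "i = Suc (length hs1)" "n = length as2"
      using i len len_hs1 by auto
    have "Phi sA act (compO D eps m n i [p] y) as
        = sA c (pure_eval hs (as1 @ Phi sA act y as2 # as3))"
      using Phi_compO_single[OF len_hs1, of as2 y m c h hs2 as3] y
      by (simp add: p hs ind as_split pure_eval_slot[OF len_hs1])
    with Cons.hyps \<open>tarity m x\<close> show ?case
      by (subst compO_Cons_left) (simp add: Phi_append p)
  qed (simp add: compO_def)
  then show ?thesis
    by (simp add: compE_def as1_def as2_def as3_def)
qed

lemma tarity_compO:
  "tarity m x \<Longrightarrow> tarity n y \<Longrightarrow> 1 \<le> i \<Longrightarrow> i \<le> m \<Longrightarrow> tarity (m + n - 1) (compO D eps m n i x y)"
  unfolding tarity_def compO_def by (force dest: length_iterD)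

text \<open>The functional induced by Phi on the free k-module over 'h list (finitely supported
coefficient functions u; for infinite support the sum is 0 by convention).\<close>

definition eval_free :: "nat \<Rightarrow> 'a list \<Rightarrow> ('h list \<Rightarrow> 'k) \<Rightarrow> 'a" where
  "eval_free n as u = (\<Sum>t | u t \<noteq> 0. sA (u t) (if length t = n then pure_eval t as else 0))"

lemma eval_free_eq_sum:
  assumes "finite T" and "{t. u t \<noteq> 0} \<subseteq> T"
  shows "eval_free n as u = (\<Sum>t\<in>T. sA (u t) (if length t = n then pure_eval t as else 0))"
  unfolding eval_free_def using assms
  by (intro sum.mono_neutral_left) (auto intro: finite_subset)

lemma eval_free_add:
  assumes "finite {t. u t \<noteq> 0}" and "finite {t. v t \<noteq> 0}"
  shows "eval_free n as (\<lambda>t. u t + v t) = eval_free n as u + eval_free n as v"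
proof -
  let ?T = "{t. u t \<noteq> 0} \<union> {t. v t \<noteq> 0}"
  have "finite ?T" and "{t. u t + v t \<noteq> 0} \<subseteq> ?T"
    using assms by auto
  then show ?thesis
    by (simp add: eval_free_eq_sum[of ?T] sA_add_left sum.distrib)
qed

lemma eval_free_diff:
  assumes "finite {t. u t \<noteq> 0}" and "finite {t. v t \<noteq> 0}"
  shows "eval_free n as (\<lambda>t. u t - v t) = eval_free n as u - eval_free n as v"
proof -
  let ?T = "{t. u t \<noteq> 0} \<union> {t. v t \<noteq> 0}"
  have "finite ?T" and "{t. u t - v t \<noteq> 0} \<subseteq> ?T"
    using assms by auto
  then show ?thesis
    by (simp add: eval_free_eq_sum[of ?T] sA_diff_left sum_subtractf)
qed

lemma eval_free_smult:
  assumes "finite {t. u t \<noteq> 0}"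
  shows "eval_free n as (\<lambda>t. c * u t) = sA c (eval_free n as u)"
proof -
  have "{t. c * u t \<noteq> 0} \<subseteq> {t. u t \<noteq> 0}"
    by auto
  then show ?thesis
    using assms by (simp add: eval_free_eq_sum[of "{t. u t \<noteq> 0}"] sA_sum)
qed

lemma finite_support_basis: "finite {t. (basis p t :: 'k) \<noteq> 0}"
  by (rule finite_subset[of _ "{p}"]) (auto simp: basis_def)

lemma finite_support_diff:
  fixes u v :: "'h list \<Rightarrow> 'k"
  shows "finite {t. u t \<noteq> 0} \<Longrightarrow> finite {t. v t \<noteq> 0} \<Longrightarrow> finite {t. u t - v t \<noteq> 0}"
  by (rule finite_subset[of _ "{t. u t \<noteq> 0} \<union> {t. v t \<noteq> 0}"]) auto

lemma eval_free_basis: "eval_free n as (basis p) = (if length p = n then pure_eval p as else 0)"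
  by (subst eval_free_eq_sum[of "{p}"]) (auto simp: basis_def)

lemma finite_support_tens_rel: "u \<in> tens_rel sH \<Longrightarrow> finite {t. u t \<noteq> 0}"
proof (induct rule: tens_rel.induct)
  case (add u v)
  then show ?case
    by (auto intro: finite_subset[of _ "{t. u t \<noteq> 0} \<union> {t. v t \<noteq> 0}"])
next
  case (smult u c)
  then show ?case
    by (auto intro: finite_subset[of _ "{t. u t \<noteq> 0}"])
next
  case (addgen xs a b ys)
  show ?case
    by (rule finite_subset[of _ "{xs @ (a + b) # ys, xs @ a # ys, xs @ b # ys}"])
       (auto simp: basis_def)
next
  case (smultgen xs c a ys)
  show ?case
    by (rule finite_subset[of _ "{xs @ sH c a # ys, xs @ a # ys}"]) (auto simp: basis_def)
qed simp

lemma eval_free_tens_rel: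
  assumes "u \<in> tens_rel sH" and "length as = n"
  shows "eval_free n as u = 0"
  using assms(1)
proof (induct rule: tens_rel.induct)
  case zero
  then show ?case by (simp add: eval_free_def)
next
  case (add u v)
  then show ?case by (simp add: eval_free_add finite_support_tens_rel)
next
  case (smult u c)
  then show ?case by (simp add: eval_free_smult finite_support_tens_rel)
next
  case (addgen xs a b ys)
  let ?P = "xs @ (a + b) # ys" and ?Q = "xs @ a # ys" and ?R = "xs @ b # ys"
  have "eval_free n as (\<lambda>t. basis ?P t - basis ?Q t - basis ?R t)
      = eval_free n as (basis ?P) - eval_free n as (basis ?Q) - eval_free n as (basis ?R)"
    using finite_support_diff[OF finite_support_basis finite_support_basis, of ?P ?Q]
    by (simp only: eval_free_diff finite_support_basis)
  also have "\<dots> = 0"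
  proof (cases "length (xs @ a # ys) = n")
    case True
    then have "length xs < length as"
      using assms(2) by simp
    then obtain as1 a' as2 where "as = as1 @ a' # as2" and "length as1 = length xs"
      by (rule split_list_at)
    with True show ?thesis
      by (simp add: eval_free_basis pure_eval_slot act_add_left distrib_left distrib_right)
  qed (simp add: eval_free_basis)
  finally show ?case .
next
  case (smultgen xs c a ys)
  let ?P = "xs @ sH c a # ys" and ?Q = "xs @ a # ys"
  have "finite {t. c * basis ?Q t \<noteq> 0}"
    using finite_support_basis[of ?Q] by (rule rev_finite_subset) auto
  then have "eval_free n as (\<lambda>t. basis ?P t - c * basis ?Q t)
      = eval_free n as (basis ?P) - sA c (eval_free n as (basis ?Q))"
    by (simp only: eval_free_diff eval_free_smult finite_support_basis)
  also have "\<dots> = 0"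
  proof (cases "length ?Q = n")
    case True
    then have "length xs < length as"
      using assms(2) by simp
    then obtain as1 a' as2 where "as = as1 @ a' # as2" and "length as1 = length xs"
      by (rule split_list_at)
    with True show ?thesis
      by (simp add: eval_free_basis pure_eval_slot)
  qed (simp add: eval_free_basis)
  finally show ?case .
qed

lemma finite_support_fs: "finite {t. fs x t \<noteq> 0}"
proof (rule finite_subset)
  show "{t. fs x t \<noteq> 0} \<subseteq> set (map snd x)"
  proof
    fix t
    assume "t \<in> {t. fs x t \<noteq> 0}"
    then have "filter (\<lambda>p. snd p = t) x \<noteq> []"
      by (auto simp: fs_def)
    then show "t \<in> set (map snd x)"
      by (auto simp: filter_empty_conv)
  qed
qed simp

lemma Phi_eq_eval_free: "tarity n x \<Longrightarrow> Phi sA act x as = eval_free n as (fs x)"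
proof (induct x)
  case Nil
  then show ?case by (simp add: fs_def eval_free_def)
next
  case (Cons p x)
  obtain c hs where p: "p = (c, hs)" by force
  with Cons.prems have "length hs = n" and "tarity n x"
    by (auto simp: tarity_def)
  moreover have "fs (p # x) = (\<lambda>t. c * basis hs t + fs x t)"
    by (auto simp: p fs_def basis_def)
  moreover have "finite {t. c * basis hs t \<noteq> 0}"
    using finite_support_basis[of hs] by (rule rev_finite_subset) auto
  ultimately show ?case
    using Cons.hyps
    by (simp add: p eval_free_add eval_free_smult finite_support_basis finite_support_fs
        eval_free_basis)
qed

lemma Phi_teq:
  assumes "tarity n x" and "tarity n y" and "teq sH x y" and "length as = n"
  shows "Phi sA act x as = Phi sA act y as"
proof -
  have "Phi sA act x as - Phi sA act y as = eval_free n as (\<lambda>t. fs x t - fs y t)"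
    using assms(1,2) by (simp add: Phi_eq_eval_free eval_free_diff finite_support_fs)
  also have "\<dots> = 0"
    using assms(3,4) unfolding teq_def by (rule eval_free_tens_rel)
  finally show ?thesis
    by simp
qed

definition Phi_rel :: "nat \<Rightarrow> ('k, 'h) tens \<Rightarrow> ('a list \<Rightarrow> 'a) \<Rightarrow> bool" where
  "Phi_rel n x f \<longleftrightarrow> tarity n x \<and> (\<forall>as. length as = n \<longrightarrow> Phi sA act x as = f as)"

lemma Phi_rel_Phi: "tarity n x \<Longrightarrow> Phi_rel n x (Phi sA act x)"
  by (simp add: Phi_rel_def)

lemma Phi_muO: "Phi sA act muO [a, b] = muE [a, b]"
  by (simp add: muO_def muE_def pure_eval_def)

lemma compE_cong:
  assumes "\<And>as. length as = m \<Longrightarrow> f as = f' as" and "\<And>as. length as = n \<Longrightarrow> g as = g' as"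
    and "length as = m + n - 1" and "1 \<le> i" and "i \<le> m"
  shows "compE m n i f g as = compE m n i f' g' as"
  using assms unfolding compE_def by simp

sublocale Phi: operad_mult_rel Phi_rel "(@)" "[]" sgO "compO D eps" muO
  addE "\<lambda>_. 0" "sgE sA" compE muE
proof
  show "Phi_rel n (x @ y) (addE f g)" if "Phi_rel n x f" "Phi_rel n y g" for n x y f g
    using that by (auto simp: Phi_rel_def tarity_def addE_def Phi_append)
  show "Phi_rel n [] (\<lambda>_. 0)" for n
    by (simp add: Phi_rel_def tarity_def)
  show "Phi_rel n (sgO s x) (sgE sA s f)" if "Phi_rel n x f" for n s x f
    using that by (auto simp: Phi_rel_def tarity_def sgO_def sgE_def tscale_def Phi_tscale[unfolded tscale_def])
  show "Phi_rel (m + n - 1) (compO D eps m n i x y) (compE m n i f g)"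
    if "Phi_rel m x f" "Phi_rel n y g" "1 \<le> i" "i \<le> m" for m n i x y f g
    using that tarity_compO[of m x n y i] by (auto simp: Phi_rel_def Phi_compO intro!: compE_cong)
  show "Phi_rel 2 muO muE"
    by (auto simp: Phi_rel_def tarity_def muO_def muE_def numeral_2_eq_2 length_Suc_conv pure_eval_def)
qed

end

theorem lemma7p1:
  fixes sH :: "'k::comm_ring_1 \<Rightarrow> 'h::ring_1 \<Rightarrow> 'h"
    and D :: "'h \<Rightarrow> ('k, 'h) tens" and eps :: "'h \<Rightarrow> 'k"
    and sA :: "'k \<Rightarrow> 'a::ring_1 \<Rightarrow> 'a" and act :: "'h \<Rightarrow> 'a \<Rightarrow> 'a"
  assumes "is_bialgebra sH D eps"
    and "is_module_algebra sH D eps sA act"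
  shows
    \<comment> \<open>Phi_n lands in Hom(A^n, A) and is a well-defined k-linear map on H^n\<close>
    "(\<forall>n x. tarity n x \<longrightarrow> multilinear sA n (Phi sA act x))
   \<and> (\<forall>n x y. tarity n x \<longrightarrow> tarity n y \<longrightarrow> teq sH x y \<longrightarrow>
        (\<forall>as. length as = n \<longrightarrow> Phi sA act x as = Phi sA act y as))
   \<and> (\<forall>x y as. Phi sA act (x @ y) as = Phi sA act x as + Phi sA act y as)
   \<and> (\<forall>c x as. Phi sA act (tscale c x) as = sA c (Phi sA act x as))
    \<comment> \<open>preservation of identity, multiplication and e\<close>
   \<and> (\<forall>a. Phi sA act [(1, [1])] [a] = a)
   \<and> (\<forall>a b. Phi sA act muO [a, b] = muE [a, b])
   \<and> Phi sA act [(1, [])] [] = 1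
    \<comment> \<open>preservation of partial compositions\<close>
   \<and> (\<forall>m n i x y. tarity m x \<longrightarrow> tarity n y \<longrightarrow> 1 \<le> i \<longrightarrow> i \<le> m \<longrightarrow>
        (\<forall>as. length as = m + n - 1 \<longrightarrow>
           Phi sA act (compO D eps m n i x y) as = compE m n i (Phi sA act x) (Phi sA act y) as))
    \<comment> \<open>consequently: chain map, preserving cup product and Gerstenhaber bracket\<close>
   \<and> (\<forall>n x. tarity n x \<longrightarrow> (\<forall>as. length as = n + 1 \<longrightarrow>
        Phi sA act (op_d (@) [] sgO (compO D eps) muO n x) as
        = op_d addE (\<lambda>_. 0) (sgE sA) compE muE n (Phi sA act x) as))
   \<and> (\<forall>m n x y. tarity m x \<longrightarrow> tarity n y \<longrightarrow> (\<forall>as. length as = m + n \<longrightarrow>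
        Phi sA act (op_cup (compO D eps) muO m n x y) as
        = op_cup compE muE m n (Phi sA act x) (Phi sA act y) as))
   \<and> (\<forall>m n x y. tarity m x \<longrightarrow> tarity n y \<longrightarrow> (\<forall>as. length as = m + n - 1 \<longrightarrow>
        Phi sA act (op_bracket (@) [] sgO (compO D eps) m n x y) as
        = op_bracket addE (\<lambda>_. 0) (sgE sA) compE m n (Phi sA act x) (Phi sA act y) as))"
proof -
  interpret module_algebra sH D eps sA act
    by unfold_locales (rule assms(2))
  have d: "Phi_rel (n + 1) (op_d (@) [] sgO (compO D eps) muO n x)
      (op_d addE (\<lambda>_. 0) (sgE sA) compE muE n (Phi sA act x))" if "tarity n x" for n x
    using that by (intro Phi.rel_op_d Phi_rel_Phi)
  have cup: "Phi_rel (m + n) (op_cup (compO D eps) muO m n x y)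
      (op_cup compE muE m n (Phi sA act x) (Phi sA act y))" if "tarity m x" "tarity n y" for m n x y
    using that by (intro Phi.rel_op_cup Phi_rel_Phi)
  have bracket: "Phi_rel (m + n - 1) (op_bracket (@) [] sgO (compO D eps) m n x y)
      (op_bracket addE (\<lambda>_. 0) (sgE sA) compE m n (Phi sA act x) (Phi sA act y))"
    if "tarity m x" "tarity n y" for m n x y
    using that by (intro Phi.rel_op_bracket Phi_rel_Phi)
  show ?thesis
    using d cup bracket unfolding Phi_rel_def
    by (simp add: Phi_multilinear Phi_teq Phi_append Phi_tscale Phi_muO Phi_compO pure_eval_def)
qed

end
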